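(* For any continuous function $f:\mathrm{SO}(3)\to\mathbb{R}^3$, there exists a rotation $R\in\mathrm{SO}(3)$ such that $d(R,\mathbf{R}_{xyz}(f(R)))=\pi$.
   Context: Unit quaternions $w+x\mathbf{i}+y\mathbf{j}+z\mathbf{k}$ are identified with $(w,x,y,z)\in S^3$. $\mathbf{R}_Q:S^3\to\mathrm{SO}(3)$ is the standard conversion $$\mathbf{R}_Q(w,x,y,z)=\begin{bmatrix}1-2y^2-2z^2 & 2(xy-zw) & 2(xz+yw)\\ 2(xy+zw) & 1-2x^2-2z^2 & 2(yz-xw)\\ 2(xz-yw) & 2(yz+xw) & 1-2x^2-2y^2\end{bmatrix}.$$ Extrinsic $x$-$y$-$z$ Euler angles: $\mathbf{Q}_{xyz}(\alpha,\beta,\gamma)=(\cos\frac{\gamma}{2}+\mathbf{k}\sin\frac{\gamma}{2})(\cos\frac{\beta}{2}+\mathbf{j}\sin\frac{\beta}{2})(\cos\frac{\alpha}{2}+\mathbf{i}\sin\frac{\alpha}{2})$ (quaternion product) and $\mathbf{R}_{xyz}(\alpha,\beta,\gamma)=\mathbf{R}_Q(\mathbf{Q}_{xyz}(\alpha,\beta,\gamma))$. For $R_1,R_2\in\mathrm{SO}(3)$, $d(R_1,R_2)=\cos^{-1}\frac{\mathrm{tr}(R_2R_1^{-1})-1}{2}$ is the angle of the rotation $R_2R_1^{-1}$. *)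

theory Defs
  imports "HOL-Analysis.Analysis"
begin

text \<open>Quaternions w + x i + y j + z k represented as tuples (w,x,y,z).\<close>
type_synonym quat = "real \<times> real \<times> real \<times> real"

definition qmult :: "quat \<Rightarrow> quat \<Rightarrow> quat" where
  "qmult p q = (case p of (w1,x1,y1,z1) \<Rightarrow> case q of (w2,x2,y2,z2) \<Rightarrow>
     (w1*w2 - x1*x2 - y1*y2 - z1*z2,
      w1*x2 + x1*w2 + y1*z2 - z1*y2,
      w1*y2 - x1*z2 + y1*w2 + z1*x2,
      w1*z2 + x1*y2 - y1*x2 + z1*w2))"

definition SO3 :: "(real^3^3) set" where
  "SO3 = {R. orthogonal_matrix R \<and> det R = 1}"

definition R_Q :: "quat \<Rightarrow> real^3^3" where
  "R_Q q = (case q of (w,x,y,z) \<Rightarrow>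
     vector [vector [1 - 2*y^2 - 2*z^2, 2*(x*y - z*w), 2*(x*z + y*w)],
             vector [2*(x*y + z*w), 1 - 2*x^2 - 2*z^2, 2*(y*z - x*w)],
             vector [2*(x*z - y*w), 2*(y*z + x*w), 1 - 2*x^2 - 2*y^2]])"

definition Q_xyz :: "real \<Rightarrow> real \<Rightarrow> real \<Rightarrow> quat" where
  "Q_xyz \<alpha> \<beta> \<gamma> =
     qmult (qmult (cos (\<gamma>/2), 0, 0, sin (\<gamma>/2)) (cos (\<beta>/2), 0, sin (\<beta>/2), 0))
           (cos (\<alpha>/2), sin (\<alpha>/2), 0, 0)"

definition R_xyz :: "real \<Rightarrow> real \<Rightarrow> real \<Rightarrow> real^3^3" where
  "R_xyz \<alpha> \<beta> \<gamma> = R_Q (Q_xyz \<alpha> \<beta> \<gamma>)"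

definition rot_dist :: "real^3^3 \<Rightarrow> real^3^3 \<Rightarrow> real" where
  "rot_dist R1 R2 = arccos ((trace (R2 ** matrix_inv R1) - 1) / 2)"

end

theory Submission
  imports Defs
begin

text \<open>
  The rotations \<open>R_Q (cos t, sin t, 0, 0)\<close>, \<open>0 \<le> t \<le> \<pi>\<close>, form a closed loop in SO(3), whereas
  their quaternions run from \<open>q\<close> to \<open>-q\<close>. For a continuous unit quaternion field \<open>h\<close> on SO(3)
  the inner product of \<open>h\<close> with the loop quaternion therefore changes sign along the loop and
  vanishes somewhere. Since \<open>tr (R_Q p R_Q q\<^sup>T) = 4 \<langle>p, q\<rangle>\<^sup>2 - 1\<close> for unit quaternions, orthogonal
  unit quaternions give rotations at distance \<open>\<pi>\<close>. Composing \<open>f\<close> with the Euler-angle quaternion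
  map \<open>Q_xyz\<close> yields such a field \<open>h\<close>.
\<close>

lemma matrix_inv_orthogonal_matrix:
  fixes Q :: "real^'n^'n"
  assumes "orthogonal_matrix Q"
  shows "matrix_inv Q = transpose Q"
proof -
  have "\<exists>Q'. Q ** Q' = mat 1 \<and> Q' ** Q = mat 1"
    using assms unfolding orthogonal_matrix_def by blast
  then have inv: "Q ** matrix_inv Q = mat 1"
    unfolding matrix_inv_def by (rule someI2_ex) blast
  have "matrix_inv Q = (transpose Q ** Q) ** matrix_inv Q"
    using assms unfolding orthogonal_matrix_def by simp
  also have "\<dots> = transpose Q"
    using inv by (simp flip: matrix_mul_assoc)
  finally show ?thesis .
qed

lemma IVT_opposite_values:
  fixes \<phi> :: "real \<Rightarrow> real"
  assumes "continuous_on {a..b} \<phi>" "a \<le> b" "\<phi> b = - \<phi> a"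
  shows "\<exists>t\<in>{a..b}. \<phi> t = 0"
proof (cases "\<phi> a \<le> 0")
  case True
  then show ?thesis using IVT'[of \<phi> a 0 b] assms by auto
next
  case False
  then show ?thesis using IVT2'[of \<phi> b 0 a] assms by auto
qed

lemma norm_qmult: "norm (qmult p q) = norm p * norm q"
proof -
  obtain a b c d a' b' c' d' where pq: "p = (a, b, c, d)" "q = (a', b', c', d')"
    by (cases p, cases q) auto
  have "(norm (qmult p q))\<^sup>2 = (norm p * norm q)\<^sup>2"
    unfolding power_mult_distrib power2_norm_eq_inner pq
    by (simp add: qmult_def) algebra
  then show ?thesis
    by (simp add: power2_eq_iff_nonneg)
qed

lemma norm_Q_xyz: "norm (Q_xyz \<alpha> \<beta> \<gamma>) = 1"
  by (simp add: Q_xyz_def norm_qmult norm_Pair)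

lemma continuous_on_qmult [continuous_intros]:
  assumes "continuous_on S p" "continuous_on S q"
  shows "continuous_on S (\<lambda>x. qmult (p x) (q x))"
  unfolding qmult_def case_prod_beta by (intro continuous_intros assms)

lemma continuous_on_Q_xyz [continuous_intros]:
  fixes \<alpha> \<beta> \<gamma> :: "'a::t2_space \<Rightarrow> real"
  assumes "continuous_on S \<alpha>" "continuous_on S \<beta>" "continuous_on S \<gamma>"
  shows "continuous_on S (\<lambda>x. Q_xyz (\<alpha> x) (\<beta> x) (\<gamma> x))"
  unfolding Q_xyz_def by (auto intro!: continuous_intros assms)

lemma continuous_on_R_Q: "continuous_on S R_Q"
proof -
  have "\<forall>i j. continuous_on S (\<lambda>q. R_Q q $ i $ j)"
    unfolding forall_3 R_Q_def case_prod_beta by (simp add: continuous_intros)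
  then have "continuous_on S (\<lambda>q. \<chi> i j. R_Q q $ i $ j)"
    by (intro continuous_on_vec_lambda) blast
  then show ?thesis
    by simp
qed

lemma R_Q_minus: "R_Q (- q) = R_Q q"
  by (cases q) (simp add: R_Q_def algebra_simps)

lemma R_Q_in_SO3:
  assumes "norm q = 1"
  shows "R_Q q \<in> SO3"
proof -
  obtain w x y z where q: "q = (w, x, y, z)"
    by (cases q) auto
  with assms have "w\<^sup>2 + x\<^sup>2 + y\<^sup>2 + z\<^sup>2 = 1"
    by (simp add: norm_eq_1 power2_eq_square add.assoc)
  then show ?thesis
    unfolding q SO3_def orthogonal_matrix R_Q_def
    by (simp add: vec_eq_iff forall_3 det_3 matrix_matrix_mult_def transpose_def sum_3 mat_def)
      algebra
qed

lemma trace_R_Q_mult_transpose: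
  assumes "norm p = 1" "norm q = 1"
  shows "trace (R_Q p ** transpose (R_Q q)) = 4 * (p \<bullet> q)\<^sup>2 - 1"
proof -
  obtain w x y z w' x' y' z' where pq: "p = (w, x, y, z)" "q = (w', x', y', z')"
    by (cases p, cases q) auto
  with assms have "w\<^sup>2 + x\<^sup>2 + y\<^sup>2 + z\<^sup>2 = 1" "w'\<^sup>2 + x'\<^sup>2 + y'\<^sup>2 + z'\<^sup>2 = 1"
    by (simp_all add: norm_eq_1 power2_eq_square add.assoc)
  then show ?thesis
    unfolding pq R_Q_def trace_def
    by (simp add: matrix_matrix_mult_def transpose_def sum_3) algebra
qed

lemma rot_dist_R_Q:
  assumes "norm p = 1" "norm q = 1"
  shows "rot_dist (R_Q q) (R_Q p) = arccos (2 * (p \<bullet> q)\<^sup>2 - 1)"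
proof -
  have "matrix_inv (R_Q q) = transpose (R_Q q)"
    using R_Q_in_SO3[OF assms(2)] by (simp add: SO3_def matrix_inv_orthogonal_matrix)
  then show ?thesis
    unfolding rot_dist_def by (simp add: trace_R_Q_mult_transpose[OF assms] diff_divide_distrib)
qed

lemma rot_dist_R_Q_orthogonal:
  assumes "norm p = 1" "norm q = 1" "p \<bullet> q = 0"
  shows "rot_dist (R_Q q) (R_Q p) = pi"
  using assms by (simp add: rot_dist_R_Q)

lemma exists_rot_dist_R_Q_pi:
  fixes h :: "real^3^3 \<Rightarrow> quat"
  assumes "continuous_on SO3 h" and "\<And>R. R \<in> SO3 \<Longrightarrow> norm (h R) = 1"
  shows "\<exists>R\<in>SO3. rot_dist R (R_Q (h R)) = pi"
proof -
  define q :: "real \<Rightarrow> quat" where "q t = (cos t, sin t, 0, 0)" for t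
  have q_unit: "norm (q t) = 1" for t
    by (simp add: q_def norm_Pair)
  then have loop_SO3: "R_Q (q t) \<in> SO3" for t
    by (rule R_Q_in_SO3)
  have q_antipodal: "q pi = - q 0"
    by (simp add: q_def)
  have q_cont: "continuous_on UNIV q"
    unfolding q_def by (intro continuous_intros)
  have h_loop_cont: "continuous_on UNIV (\<lambda>t. h (R_Q (q t)))"
    using continuous_on_compose2[OF continuous_on_R_Q q_cont subset_UNIV]
    by (rule continuous_on_compose2[OF assms(1)]) (auto simp: loop_SO3)
  define \<phi> where "\<phi> t = h (R_Q (q t)) \<bullet> q t" for t
  have "continuous_on UNIV \<phi>"
    unfolding \<phi>_def by (intro continuous_intros q_cont h_loop_cont)
  then have "continuous_on {0..pi} \<phi>"
    by (rule continuous_on_subset) simp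
  moreover have "\<phi> pi = - \<phi> 0"
    using q_antipodal by (simp add: \<phi>_def R_Q_minus)
  ultimately obtain t where "\<phi> t = 0"
    using IVT_opposite_values[of 0 pi \<phi>] by auto
  then have "rot_dist (R_Q (q t)) (R_Q (h (R_Q (q t)))) = pi"
    unfolding \<phi>_def by (intro rot_dist_R_Q_orthogonal assms(2) loop_SO3 q_unit)
  then show ?thesis
    using loop_SO3 by blast
qed

theorem corollary2:
  fixes f :: "real^3^3 \<Rightarrow> real^3"
  assumes "continuous_on SO3 f"
  shows "\<exists>R\<in>SO3. rot_dist R (R_xyz (f R $ 1) (f R $ 2) (f R $ 3)) = pi"
  unfolding R_xyz_def
  by (intro exists_rot_dist_R_Q_pi continuous_intros assms norm_Q_xyz)

end
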